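(* Let $p:\mathcal{Q}\to\mathcal{C}$ be a functor of categories. If $p$ is ULF, then the functor of operads $\mathcal{W}(p):\mathcal{W}(\mathcal{Q})\to\mathcal{W}(\mathcal{C})$ is ULF; and if $p$ is finitary, then $\mathcal{W}(p)$ is finitary.
   Context: Composition in categories is written diagrammatically. Operads are colored (non-symmetric) operads/multicategories: operations $f:A_1,\dots,A_n\to A$ with partial compositions $g\circ_i h$ (plugging $h$ into the $i$-th input of $g$) and identities. For a category $\mathcal{C}$, the operad of spliced arrows $\mathcal{W}(\mathcal{C})$ has as colors pairs $(A,B)$ of objects of $\mathcal{C}$; an $n$-ary operation $(A_1,B_1),\dots,(A_n,B_n)\to(A,B)$ is a sequence $w_0\text{-}w_1\text{-}\cdots\text{-}w_n$ of arrows $w_0:A\to A_1$, $w_i:B_i\to A_{i+1}$ for $1\le i<n$, and $w_n:B_n\to B$ (for $n=0$, a single arrow $w_0:A\to B$, so constants of color $(A,B)$ are arrows $A\to B$). Partial composition is $(w_0\text{-}\cdots\text{-}w_n)\circ_i(u_0\text{-}\cdots\text{-}u_m)=w_0\text{-}\cdots\text{-}w_{i-2}\text{-}(w_{i-1}u_0)\text{-}u_1\text{-}\cdots\text{-}u_{m-1}\text{-}(u_m w_i)\text{-}w_{i+1}\text{-}\cdots\text{-}w_n$, and the identity on $(A,B)$ is $\mathrm{id}_A\text{-}\mathrm{id}_B$. For a functor $p$, $\mathcal{W}(p)$ sends $(q,q')\mapsto(p(q),p(q'))$ and $w_0\text{-}\cdots\text{-}w_n\mapsto p(w_0)\text{-}\cdots\text{-}p(w_n)$.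 A functor of categories $p$ is ULF if for every arrow $\alpha$ and arrows $u,v$ with $p(\alpha)=uv$ there is a unique pair $\beta,\gamma$ with $\alpha=\beta\gamma$, $p(\beta)=u$, $p(\gamma)=v$. A functor of operads $p:\mathcal{D}\to\mathcal{O}$ is ULF if for every operation $\alpha$ of $\mathcal{D}$ and operations $g,h$ of $\mathcal{O}$ and index $i$ with $p(\alpha)=g\circ_i h$ there is a unique pair of operations $\beta,\gamma$ of $\mathcal{D}$ with $\alpha=\beta\circ_i\gamma$, $p(\beta)=g$, $p(\gamma)=h$. A functor (of categories or operads) is finitary if the fiber over each object/color and the fiber over each arrow/operation is finite. *)

theory Defs
  imports Main
begin

record ('o,'a) cat =
  Ob   :: "'o set"
  Ar   :: "'a set"
  dom  :: "'a \<Rightarrow> 'o"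
  cod  :: "'a \<Rightarrow> 'o"
  comp :: "'a \<Rightarrow> 'a \<Rightarrow> 'a"   (* comp C f g = f g : first f, then g; needs cod f = dom g *)
  ide  :: "'o \<Rightarrow> 'a"

definition category :: "('o,'a) cat \<Rightarrow> bool" where
  "category C \<longleftrightarrow>
     (\<forall>f\<in>Ar C. dom C f \<in> Ob C \<and> cod C f \<in> Ob C) \<and>
     (\<forall>f\<in>Ar C. \<forall>g\<in>Ar C. cod C f = dom C g \<longrightarrow>
        comp C f g \<in> Ar C \<and> dom C (comp C f g) = dom C f \<and> cod C (comp C f g) = cod C g) \<and>
     (\<forall>f\<in>Ar C. \<forall>g\<in>Ar C. \<forall>h\<in>Ar C. cod C f = dom C g \<longrightarrow> cod C g = dom C h \<longrightarrow>
        comp C (comp C f g) h = comp C f (comp C g h)) \<and>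
     (\<forall>A\<in>Ob C. ide C A \<in> Ar C \<and> dom C (ide C A) = A \<and> cod C (ide C A) = A) \<and>
     (\<forall>f\<in>Ar C. comp C (ide C (dom C f)) f = f \<and> comp C f (ide C (cod C f)) = f)"

definition is_functor :: "('o1,'a1) cat \<Rightarrow> ('o2,'a2) cat \<Rightarrow> ('o1 \<Rightarrow> 'o2) \<Rightarrow> ('a1 \<Rightarrow> 'a2) \<Rightarrow> bool" where
  "is_functor Q C pO pA \<longleftrightarrow> category Q \<and> category C \<and>
     (\<forall>A\<in>Ob Q. pO A \<in> Ob C) \<and>
     (\<forall>f\<in>Ar Q. pA f \<in> Ar C \<and> dom C (pA f) = pO (dom Q f) \<and> cod C (pA f) = pO (cod Q f)) \<and>
     (\<forall>f\<in>Ar Q. \<forall>g\<in>Ar Q. cod Q f = dom Q g \<longrightarrow> pA (comp Q f g) = comp C (pA f) (pA g)) \<and>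
     (\<forall>A\<in>Ob Q. pA (ide Q A) = ide C (pO A))"

definition functor_ULF :: "('o1,'a1) cat \<Rightarrow> ('o2,'a2) cat \<Rightarrow> ('a1 \<Rightarrow> 'a2) \<Rightarrow> bool" where
  "functor_ULF Q C pA \<longleftrightarrow>
     (\<forall>\<alpha>\<in>Ar Q. \<forall>u\<in>Ar C. \<forall>v\<in>Ar C. cod C u = dom C v \<longrightarrow> pA \<alpha> = comp C u v \<longrightarrow>
        (\<exists>!(\<beta>,\<gamma>). \<beta> \<in> Ar Q \<and> \<gamma> \<in> Ar Q \<and> cod Q \<beta> = dom Q \<gamma> \<and>
                  \<alpha> = comp Q \<beta> \<gamma> \<and> pA \<beta> = u \<and> pA \<gamma> = v))"

definition functor_finitary :: "('o1,'a1) cat \<Rightarrow> ('o2,'a2) cat \<Rightarrow> ('o1 \<Rightarrow> 'o2) \<Rightarrow> ('a1 \<Rightarrow> 'a2) \<Rightarrow> bool" where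
  "functor_finitary Q C pO pA \<longleftrightarrow>
     (\<forall>X\<in>Ob C. finite {Y\<in>Ob Q. pO Y = X}) \<and>
     (\<forall>f\<in>Ar C. finite {g\<in>Ar Q. pA g = f})"

text \<open>An operation o has list of input colors ins o (length = arity) and output color out o.
  pcomp g i h is the partial composition g \<circ>_i h, with inputs indexed 1..n.\<close>
record ('c,'op) operad =
  Col   :: "'c set"
  Ops   :: "'op set"
  ins   :: "'op \<Rightarrow> 'c list"
  out   :: "'op \<Rightarrow> 'c"
  pcomp :: "'op \<Rightarrow> nat \<Rightarrow> 'op \<Rightarrow> 'op"
  oid   :: "'c \<Rightarrow> 'op"

definition composable :: "('c,'op) operad \<Rightarrow> 'op \<Rightarrow> nat \<Rightarrow> 'op \<Rightarrow> bool" where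
  "composable P g i h \<longleftrightarrow> g \<in> Ops P \<and> h \<in> Ops P \<and> 1 \<le> i \<and> i \<le> length (ins P g) \<and>
     ins P g ! (i - 1) = out P h"

definition operad_functor_ULF ::
  "('c1,'op1) operad \<Rightarrow> ('c2,'op2) operad \<Rightarrow> ('op1 \<Rightarrow> 'op2) \<Rightarrow> bool" where
  "operad_functor_ULF D P pOp \<longleftrightarrow>
     (\<forall>\<alpha>\<in>Ops D. \<forall>g h i. composable P g i h \<longrightarrow> pOp \<alpha> = pcomp P g i h \<longrightarrow>
        (\<exists>!(\<beta>,\<gamma>). composable D \<beta> i \<gamma> \<and> \<alpha> = pcomp D \<beta> i \<gamma> \<and> pOp \<beta> = g \<and> pOp \<gamma> = h))"

definition operad_functor_finitary ::
  "('c1,'op1) operad \<Rightarrow> ('c2,'op2) operad \<Rightarrow> ('c1 \<Rightarrow> 'c2) \<Rightarrow> ('op1 \<Rightarrow> 'op2) \<Rightarrow> bool" where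
  "operad_functor_finitary D P pC pOp \<longleftrightarrow>
     (\<forall>c\<in>Col P. finite {d\<in>Col D. pC d = c}) \<and>
     (\<forall>y\<in>Ops P. finite {x\<in>Ops D. pOp x = y})"

text \<open>An n-ary operation w0-w1-...-wn is the nonempty list [w0,...,wn] of arrows;
  its i-th input color (1 \<le> i \<le> n) is (cod w_{i-1}, dom w_i), its output color (dom w0, cod wn).\<close>
definition splice_comp :: "('o,'a) cat \<Rightarrow> 'a list \<Rightarrow> nat \<Rightarrow> 'a list \<Rightarrow> 'a list" where
  "splice_comp C w i u =
     take (i - 1) w @
     (if length u = 1 then [comp C (comp C (w ! (i - 1)) (hd u)) (w ! i)]
      else [comp C (w ! (i - 1)) (hd u)] @ butlast (tl u) @ [comp C (last u) (w ! i)]) @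
     drop (i + 1) w"

definition W :: "('o,'a) cat \<Rightarrow> ('o \<times> 'o, 'a list) operad" where
  "W C = \<lparr> Col = Ob C \<times> Ob C,
           Ops = {w. w \<noteq> [] \<and> set w \<subseteq> Ar C},
           ins = (\<lambda>w. map (\<lambda>j. (cod C (w ! j), dom C (w ! (Suc j)))) [0..<length w - 1]),
           out = (\<lambda>w. (dom C (hd w), cod C (last w))),
           pcomp = splice_comp C,
           oid = (\<lambda>(A,B). [ide C A, ide C B]) \<rparr>"

definition W_col :: "('o1 \<Rightarrow> 'o2) \<Rightarrow> 'o1 \<times> 'o1 \<Rightarrow> 'o2 \<times> 'o2" where
  "W_col pO = (\<lambda>(q,q'). (pO q, pO q'))"

definition W_op :: "('a1 \<Rightarrow> 'a2) \<Rightarrow> 'a1 list \<Rightarrow> 'a2 list" where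
  "W_op pA = map pA"

end

theory Submission
  imports Defs
begin

text \<open>
  A spliced arrow lying over a composite g \<circ>_i h agrees with g outside a single block, in
  which only the two end entries are composites, w_(i-1) u_0 and u_m w_i (or the single entry
  w_(i-1) u_0 w_i when h is a constant). Hence a lift of the composite along W(p) factors uniquely
  as soon as these two binary factorizations (resp. this ternary one) lift uniquely along p,
  which is what ULF provides. Finitarity holds because a fibre of W(p) consists of lists of
  fixed length with entries in finite fibres of p.
\<close>

lemma category_comp_arr:
  assumes "category C" "f \<in> Ar C" "g \<in> Ar C" "cod C f = dom C g"
  shows "comp C f g \<in> Ar C" "dom C (comp C f g) = dom C f" "cod C (comp C f g) = cod C g"
  using assms by (simp_all add: category_def)

lemma functor_arr: "is_functor Q C pO pA \<Longrightarrow> f \<in> Ar Q \<Longrightarrow> pA f \<in> Ar C"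
  by (simp add: is_functor_def)

lemma functor_cod_dom:
  "is_functor Q C pO pA \<Longrightarrow> f \<in> Ar Q \<Longrightarrow> g \<in> Ar Q \<Longrightarrow> cod Q f = dom Q g \<Longrightarrow>
     cod C (pA f) = dom C (pA g)"
  by (simp add: is_functor_def)

lemma functor_comp:
  "is_functor Q C pO pA \<Longrightarrow> f \<in> Ar Q \<Longrightarrow> g \<in> Ar Q \<Longrightarrow> cod Q f = dom Q g \<Longrightarrow>
     pA (comp Q f g) = comp C (pA f) (pA g)"
  by (simp add: is_functor_def)

lemma ULF_lift:
  assumes "functor_ULF Q C pA" "a \<in> Ar Q" "u \<in> Ar C" "v \<in> Ar C" "cod C u = dom C v"
    and "pA a = comp C u v"
  obtains b c where "b \<in> Ar Q" "c \<in> Ar Q" "cod Q b = dom Q c" "a = comp Q b c"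
    "pA b = u" "pA c = v"
  using assms unfolding functor_ULF_def by blast

lemma ULF_factorization_unique:
  assumes F: "is_functor Q C pO pA" and U: "functor_ULF Q C pA"
    and b: "b \<in> Ar Q" "c \<in> Ar Q" "cod Q b = dom Q c"
    and b': "b' \<in> Ar Q" "c' \<in> Ar Q" "cod Q b' = dom Q c'"
    and eq: "comp Q b c = comp Q b' c'" "pA b = pA b'" "pA c = pA c'"
  shows "b = b' \<and> c = c'"
proof -
  have cQ: "category Q" using F by (simp add: is_functor_def)
  have "\<exists>!(\<beta>, \<gamma>). \<beta> \<in> Ar Q \<and> \<gamma> \<in> Ar Q \<and> cod Q \<beta> = dom Q \<gamma> \<and>
      comp Q b c = comp Q \<beta> \<gamma> \<and> pA \<beta> = pA b \<and> pA \<gamma> = pA c"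
    using U[unfolded functor_ULF_def, rule_format, OF category_comp_arr(1)[OF cQ b]
        functor_arr[OF F b(1)] functor_arr[OF F b(2)] functor_cod_dom[OF F b] functor_comp[OF F b]] .
  then have "(b, c) = (b', c')"
    using b b' eq by (simp add: Ex1_def) metis
  then show ?thesis by simp
qed

lemma ULF_lift3:
  assumes F: "is_functor Q C pO pA" and U: "functor_ULF Q C pA" and a: "a \<in> Ar Q"
    and xuy: "x \<in> Ar C" "u \<in> Ar C" "y \<in> Ar C" "cod C x = dom C u" "cod C u = dom C y"
    and pa: "pA a = comp C (comp C x u) y"
  obtains x' u' y' where "x' \<in> Ar Q" "u' \<in> Ar Q" "y' \<in> Ar Q"
    "cod Q x' = dom Q u'" "cod Q u' = dom Q y'" "a = comp Q (comp Q x' u') y'"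
    "pA x' = x" "pA u' = u" "pA y' = y"
proof -
  have cQ: "category Q" and cC: "category C" using F by (simp_all add: is_functor_def)
  note xu = category_comp_arr[OF cC xuy(1,2,4)]
  obtain a' y' where a': "a' \<in> Ar Q" "y' \<in> Ar Q" "cod Q a' = dom Q y'" "a = comp Q a' y'"
    "pA a' = comp C x u" "pA y' = y"
    using ULF_lift[OF U a xu(1) xuy(3) _ pa] xu(3) xuy(5) by metis
  obtain x' u' where x': "x' \<in> Ar Q" "u' \<in> Ar Q" "cod Q x' = dom Q u'" "a' = comp Q x' u'"
    "pA x' = x" "pA u' = u"
    using ULF_lift[OF U a'(1) xuy(1,2,4) a'(5)] by metis
  have "cod Q u' = dom Q y'" using category_comp_arr(3)[OF cQ x'(1-3)] a'(3) x'(4) by simp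
  with a' x' show thesis using that by blast
qed

lemma ULF_factorization3_unique:
  assumes F: "is_functor Q C pO pA" and U: "functor_ULF Q C pA"
    and xuy: "x \<in> Ar Q" "u \<in> Ar Q" "y \<in> Ar Q" "cod Q x = dom Q u" "cod Q u = dom Q y"
    and xuy': "x' \<in> Ar Q" "u' \<in> Ar Q" "y' \<in> Ar Q" "cod Q x' = dom Q u'" "cod Q u' = dom Q y'"
    and eq: "comp Q (comp Q x u) y = comp Q (comp Q x' u') y'"
      "pA x = pA x'" "pA u = pA u'" "pA y = pA y'"
  shows "x = x' \<and> u = u' \<and> y = y'"
proof -
  have cQ: "category Q" using F by (simp add: is_functor_def)
  note xu = category_comp_arr[OF cQ xuy(1,2,4)] and xu' = category_comp_arr[OF cQ xuy'(1,2,4)]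
  have "pA (comp Q x u) = pA (comp Q x' u')"
    using functor_comp[OF F xuy(1,2,4)] functor_comp[OF F xuy'(1,2,4)] eq(2,3) by simp
  then have "comp Q x u = comp Q x' u' \<and> y = y'"
    using ULF_factorization_unique[OF F U xu(1) xuy(3) _ xu'(1) xuy'(3)] xu xu' xuy xuy' eq
    by simp
  then show ?thesis using ULF_factorization_unique[OF F U xuy(1,2,4) xuy'(1,2,4)] eq by blast
qed

lemma W_simps [simp]:
  "Col (W C) = Ob C \<times> Ob C"
  "Ops (W C) = {w. w \<noteq> [] \<and> set w \<subseteq> Ar C}"
  "out (W C) w = (dom C (hd w), cod C (last w))"
  "pcomp (W C) = splice_comp C"
  by (simp_all add: W_def)

definition splice_block :: "('o,'a) cat \<Rightarrow> 'a \<Rightarrow> 'a \<Rightarrow> 'a list \<Rightarrow> 'a list" where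
  "splice_block C x y u =
     (if length u = 1 then [comp C (comp C x (hd u)) y]
      else [comp C x (hd u)] @ butlast (tl u) @ [comp C (last u) y])"

definition fits_between :: "('o,'a) cat \<Rightarrow> 'a \<Rightarrow> 'a \<Rightarrow> 'a list \<Rightarrow> bool" where
  "fits_between C x y u \<longleftrightarrow> x \<in> Ar C \<and> y \<in> Ar C \<and> u \<noteq> [] \<and> set u \<subseteq> Ar C \<and>
     cod C x = dom C (hd u) \<and> dom C y = cod C (last u)"

lemma splice_comp_eq_block:
  "splice_comp C (G1 @ x # y # G3) (Suc (length G1)) u = G1 @ splice_block C x y u @ G3"
  by (simp add: splice_comp_def splice_block_def nth_append)

lemma length_ins_W: "length (ins (W C) w) = length w - 1"
  by (simp add: W_def)

lemma nth_ins_W: "j < length w - 1 \<Longrightarrow> ins (W C) w ! j = (cod C (w ! j), dom C (w ! Suc j))"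
  by (simp add: W_def)

lemma composable_W_iff:
  "composable (W C) (G1 @ x # y # G3) (Suc (length G1)) u \<longleftrightarrow>
     set G1 \<subseteq> Ar C \<and> set G3 \<subseteq> Ar C \<and> fits_between C x y u"
proof -
  have "ins (W C) (G1 @ x # y # G3) ! length G1 = (cod C x, dom C y)"
    by (subst nth_ins_W) (auto simp: nth_append)
  then show ?thesis
    by (auto simp: composable_def fits_between_def length_ins_W)
qed

lemma composable_W_split:
  assumes "composable (W C) g i u"
  obtains G1 x y G3 where "g = G1 @ x # y # G3" "i = Suc (length G1)"
proof -
  have i: "1 \<le> i" "i < length g" using assms by (auto simp: composable_def length_ins_W)
  then have "drop (i - 1) g = g ! (i - 1) # drop i g"
    using Cons_nth_drop_Suc[of "i - 1" g] by simp
  also have "drop i g = g ! i # drop (Suc i) g"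
    using i by (simp add: Cons_nth_drop_Suc)
  finally have "g = take (i - 1) g @ g ! (i - 1) # g ! i # drop (Suc i) g"
    by (metis append_take_drop_id)
  then show thesis using that i by simp
qed

lemma list_cons_snoc:
  assumes "u \<noteq> []" "length u \<noteq> 1"
  obtains v V w where "u = v # V @ [w]"
proof -
  obtain v t where "u = v # t" "t \<noteq> []" using assms by (cases u) auto
  then show thesis using that by (metis append_butlast_last_id)
qed

lemma ULF_splice_block_lift:
  assumes F: "is_functor Q C pO pA" and U: "functor_ULF Q C pA"
    and m: "set m \<subseteq> Ar Q" and fit: "fits_between C x y u"
    and pm: "map pA m = splice_block C x y u"
  obtains x' y' u' where "fits_between Q x' y' u'" "m = splice_block Q x' y' u'"
    "pA x' = x" "pA y' = y" "map pA u' = u"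
proof (cases "length u = 1")
  case True
  then obtain v where u: "u = [v]" by (cases u) auto
  with pm obtain a where m_eq: "m = [a]" and pa: "pA a = comp C (comp C x v) y"
    by (auto simp: splice_block_def)
  have a: "a \<in> Ar Q" using m m_eq by simp
  have xvy: "x \<in> Ar C" "v \<in> Ar C" "y \<in> Ar C" "cod C x = dom C v" "cod C v = dom C y"
    using fit u by (auto simp: fits_between_def)
  obtain x' v' y' where "x' \<in> Ar Q" "v' \<in> Ar Q" "y' \<in> Ar Q"
    "cod Q x' = dom Q v'" "cod Q v' = dom Q y'" "a = comp Q (comp Q x' v') y'"
    "pA x' = x" "pA v' = v" "pA y' = y"
    using ULF_lift3[OF F U a xvy pa] .
  then show thesis
    using that[of x' y' "[v']"] u m_eq by (simp add: fits_between_def splice_block_def)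
next
  case False
  with fit obtain v V w where u: "u = v # V @ [w]"
    using list_cons_snoc by (metis fits_between_def)
  with pm obtain a M b where m_eq: "m = a # M @ [b]" and pa: "pA a = comp C x v"
    and pM: "map pA M = V" and pb: "pA b = comp C w y"
    by (auto simp: splice_block_def map_eq_Cons_conv map_eq_append_conv)
  have ab: "a \<in> Ar Q" "b \<in> Ar Q" using m m_eq by simp_all
  have xvwy: "x \<in> Ar C" "v \<in> Ar C" "cod C x = dom C v"
    "w \<in> Ar C" "y \<in> Ar C" "cod C w = dom C y"
    using fit u by (auto simp: fits_between_def)
  obtain x' v' where x': "x' \<in> Ar Q" "v' \<in> Ar Q" "cod Q x' = dom Q v'" "a = comp Q x' v'"
    "pA x' = x" "pA v' = v"
    using ULF_lift[OF U ab(1) xvwy(1-3) pa] .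
  obtain w' y' where w': "w' \<in> Ar Q" "y' \<in> Ar Q" "cod Q w' = dom Q y'" "b = comp Q w' y'"
    "pA w' = w" "pA y' = y"
    using ULF_lift[OF U ab(2) xvwy(4-6) pb] .
  show thesis
    using that[of x' y' "v' # M @ [w']"] x' w' m m_eq pM u
    by (simp add: fits_between_def splice_block_def)
qed

lemma ULF_splice_block_unique:
  assumes F: "is_functor Q C pO pA" and U: "functor_ULF Q C pA"
    and fit: "fits_between Q x y u" and fit': "fits_between Q x' y' u'"
    and eq: "splice_block Q x y u = splice_block Q x' y' u'"
      "pA x = pA x'" "pA y = pA y'" "map pA u = map pA u'"
  shows "x = x' \<and> y = y' \<and> u = u'"
proof -
  have len: "length u = length u'" using eq(4) by (metis length_map)
  show ?thesis
  proof (cases "length u = 1")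
    case True
    then obtain v v' where u: "u = [v]" "u' = [v']" using len
      by (metis One_nat_def length_0_conv length_Suc_conv)
    have "comp Q (comp Q x v) y = comp Q (comp Q x' v') y'"
      using eq(1) u by (simp add: splice_block_def)
    moreover have "pA v = pA v'" using eq(4) u by simp
    ultimately show ?thesis
      using ULF_factorization3_unique[OF F U, of x v y x' v' y'] fit fit' eq(2,3) u
      by (auto simp: fits_between_def)
  next
    case False
    obtain v V w where u: "u = v # V @ [w]"
      using list_cons_snoc fit False by (metis fits_between_def)
    obtain v' V' w' where u': "u' = v' # V' @ [w']"
      using list_cons_snoc fit' False len by (metis fits_between_def)
    have "length V = length V'" using len u u' by simp
    then have "comp Q x v = comp Q x' v' \<and> V = V' \<and> comp Q w y = comp Q w' y'"
      using eq(1) u u' by (simp add: splice_block_def)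
    moreover have "pA v = pA v' \<and> pA w = pA w'" using eq(4) u u' \<open>length V = length V'\<close> by simp
    ultimately show ?thesis
      using ULF_factorization_unique[OF F U, of x v x' v'] ULF_factorization_unique[OF F U, of w y w' y']
        fit fit' eq(2,3) u u' by (auto simp: fits_between_def)
  qed
qed

lemma ULF_W_factorization_lift:
  assumes F: "is_functor Q C pO pA" and U: "functor_ULF Q C pA"
    and \<alpha>: "\<alpha> \<in> Ops (W Q)" and gh: "composable (W C) g i h"
    and p\<alpha>: "map pA \<alpha> = splice_comp C g i h"
  shows "\<exists>\<beta> \<gamma>. composable (W Q) \<beta> i \<gamma> \<and> \<alpha> = splice_comp Q \<beta> i \<gamma> \<and> map pA \<beta> = g \<and> map pA \<gamma> = h"
proof -
  obtain G1 x y G3 where g: "g = G1 @ x # y # G3" and i: "i = Suc (length G1)"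
    using composable_W_split[OF gh] .
  have fit: "fits_between C x y h" using gh unfolding g i composable_W_iff by blast
  have "map pA \<alpha> = G1 @ splice_block C x y h @ G3"
    using p\<alpha> g i by (simp add: splice_comp_eq_block)
  then obtain A1 r where \<alpha>_eq1: "\<alpha> = A1 @ r" and pA1: "G1 = map pA A1"
    and pr: "splice_block C x y h @ G3 = map pA r"
    using map_eq_append_conv[THEN iffD1] by blast
  obtain m A3 where "r = m @ A3" and pm: "map pA m = splice_block C x y h"
    and pA3: "G3 = map pA A3"
    using map_eq_append_conv[THEN iffD1, OF pr[symmetric]] by (blast intro: sym)
  then have \<alpha>_eq: "\<alpha> = A1 @ m @ A3" using \<alpha>_eq1 by simp
  have "set m \<subseteq> Ar Q" using \<alpha> \<alpha>_eq by simp
  then obtain x' y' h' where fit': "fits_between Q x' y' h'" and m: "m = splice_block Q x' y' h'"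
    and "pA x' = x" "pA y' = y" "map pA h' = h"
    using ULF_splice_block_lift[OF F U _ fit pm] by blast
  define \<beta> where "\<beta> = A1 @ x' # y' # A3"
  have i': "i = Suc (length A1)" using i pA1 by simp
  have "composable (W Q) \<beta> i h'"
    using \<alpha> \<alpha>_eq fit' unfolding \<beta>_def i' composable_W_iff by simp
  moreover have "\<alpha> = splice_comp Q \<beta> i h'"
    unfolding \<beta>_def i' splice_comp_eq_block using \<alpha>_eq m by simp
  moreover have "map pA \<beta> = g" using \<beta>_def g pA1 pA3 \<open>pA x' = x\<close> \<open>pA y' = y\<close> by simp
  ultimately show ?thesis using \<open>map pA h' = h\<close> by blast
qed

lemma ULF_W_factorization_unique:
  assumes F: "is_functor Q C pO pA" and U: "functor_ULF Q C pA"
    and c: "composable (W Q) \<beta> i \<gamma>" and c': "composable (W Q) \<beta>' i \<gamma>'"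
    and eq: "splice_comp Q \<beta> i \<gamma> = splice_comp Q \<beta>' i \<gamma>'"
      "map pA \<beta> = map pA \<beta>'" "map pA \<gamma> = map pA \<gamma>'"
  shows "\<beta> = \<beta>' \<and> \<gamma> = \<gamma>'"
proof -
  obtain B1 x y B3 where \<beta>: "\<beta> = B1 @ x # y # B3" and i: "i = Suc (length B1)"
    using composable_W_split[OF c] .
  obtain B1' x' y' B3' where \<beta>': "\<beta>' = B1' @ x' # y' # B3'" and i': "i = Suc (length B1')"
    using composable_W_split[OF c'] .
  have len1: "length B1 = length B1'" using i i' by simp
  have "length \<beta> = length \<beta>'" using eq(2) by (metis length_map)
  then have len3: "length B3 = length B3'" using \<beta> \<beta>' len1 by simp
  have "B1 @ splice_block Q x y \<gamma> @ B3 = splice_comp Q \<beta> i \<gamma>"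
    by (simp only: \<beta> i splice_comp_eq_block)
  also have "\<dots> = B1' @ splice_block Q x' y' \<gamma>' @ B3'"
    by (subst eq(1)) (simp only: \<beta>' i' splice_comp_eq_block)
  finally have B1: "B1 = B1'" and B3: "B3 = B3'"
    and block: "splice_block Q x y \<gamma> = splice_block Q x' y' \<gamma>'"
    using len1 len3 by (simp_all add: append_eq_append_conv)
  have "pA x = pA x'" "pA y = pA y'"
    using eq(2) unfolding \<beta> \<beta>' B1 by simp_all
  moreover have "fits_between Q x y \<gamma>" using c unfolding \<beta> i composable_W_iff by blast
  moreover have "fits_between Q x' y' \<gamma>'" using c' unfolding \<beta>' i' composable_W_iff by blast
  ultimately have "x = x' \<and> y = y' \<and> \<gamma> = \<gamma>'"
    using ULF_splice_block_unique[OF F U _ _ block _ _ eq(3)] by blast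
  then show ?thesis using \<beta> \<beta>' B1 B3 by simp
qed

theorem W_preserves_ULF:
  assumes F: "is_functor Q C pO pA" and U: "functor_ULF Q C pA"
  shows "operad_functor_ULF (W Q) (W C) (W_op pA)"
  unfolding operad_functor_ULF_def W_op_def W_simps(4)
proof (intro ballI allI impI)
  fix \<alpha> g h i
  assume "\<alpha> \<in> Ops (W Q)" "composable (W C) g i h" "map pA \<alpha> = splice_comp C g i h"
  then show "\<exists>!(\<beta>, \<gamma>). composable (W Q) \<beta> i \<gamma> \<and> \<alpha> = splice_comp Q \<beta> i \<gamma> \<and>
      map pA \<beta> = g \<and> map pA \<gamma> = h"
    using ULF_W_factorization_lift[OF F U] ULF_W_factorization_unique[OF F U]
    by (intro ex_ex1I) (auto simp: split_def)
qed

theorem W_preserves_finitary: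
  assumes "functor_finitary Q C pO pA"
  shows "operad_functor_finitary (W Q) (W C) (W_col pO) (W_op pA)"
  unfolding operad_functor_finitary_def
proof (intro conjI ballI)
  fix c assume "c \<in> Col (W C)"
  then obtain X Y where c: "c = (X, Y)" "X \<in> Ob C" "Y \<in> Ob C" by auto
  have "{d \<in> Col (W Q). W_col pO d = c} \<subseteq> {q \<in> Ob Q. pO q = X} \<times> {q \<in> Ob Q. pO q = Y}"
    using c by (auto simp: W_col_def)
  moreover have "finite ({q \<in> Ob Q. pO q = X} \<times> {q \<in> Ob Q. pO q = Y})"
    using assms c by (simp add: functor_finitary_def)
  ultimately show "finite {d \<in> Col (W Q). W_col pO d = c}" by (rule finite_subset)
next
  fix w assume "w \<in> Ops (W C)"
  define A where "A = (\<Union>f\<in>set w. {g \<in> Ar Q. pA g = f})"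
  have "finite A" unfolding A_def using assms \<open>w \<in> Ops (W C)\<close> by (auto simp: functor_finitary_def)
  have "{x \<in> Ops (W Q). W_op pA x = w} \<subseteq> {xs. set xs \<subseteq> A \<and> length xs = length w}"
    by (auto simp: W_op_def A_def)
  moreover from \<open>finite A\<close> have "finite {xs. set xs \<subseteq> A \<and> length xs = length w}"
    by (rule finite_lists_length_eq)
  ultimately show "finite {x \<in> Ops (W Q). W_op pA x = w}" by (rule finite_subset)
qed

theorem mainTheorem5:
  fixes Q :: "('o1,'a1) cat" and C :: "('o2,'a2) cat"
    and pO :: "'o1 \<Rightarrow> 'o2" and pA :: "'a1 \<Rightarrow> 'a2"
  assumes "is_functor Q C pO pA"
  shows "(functor_ULF Q C pA \<longrightarrow> operad_functor_ULF (W Q) (W C) (W_op pA))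
       \<and> (functor_finitary Q C pO pA \<longrightarrow> operad_functor_finitary (W Q) (W C) (W_col pO) (W_op pA))"
  using W_preserves_ULF[OF assms] W_preserves_finitary by blast

end
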